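(* Let $t$ be a positive rational number. If $G$ is a minimally $t$-tough split graph, then $G$ has a vertex of degree $\lceil 2t\rceil$.
   Context: All graphs are finite, simple and undirected. A graph is split if its vertex set can be partitioned into a clique and an independent set. $\omega(H)$ denotes the number of components of $H$. A cutset of $G$ is a vertex set $S$ with $G-S$ disconnected. For positive real $t$, $G$ is $t$-tough if $\omega(G-S)\le |S|/t$ for every cutset $S$; the toughness $\tau(G)$ is the largest such $t$, with $\tau(K_n)=\infty$ for all $n\ge1$. $G$ is minimally $t$-tough if $\tau(G)=t$ and $\tau(G-e)<t$ for every edge $e$ of $G$. *)

theory Defs
  imports Complex_Main "HOL-Library.Extended_Real"
begin

definition simple_graph :: "'a set \<Rightarrow> 'a set set \<Rightarrow> bool" where
  "simple_graph V E \<longleftrightarrow> finite V \<and> (\<forall>e\<in>E. e \<subseteq> V \<and> card e = 2)"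

definition reachable :: "'a set \<Rightarrow> 'a set set \<Rightarrow> 'a \<Rightarrow> 'a \<Rightarrow> bool" where
  "reachable V E x y \<longleftrightarrow> x \<in> V \<and> y \<in> V \<and>
     (\<lambda>u v. u \<in> V \<and> v \<in> V \<and> {u, v} \<in> E)\<^sup>*\<^sup>* x y"

definition components :: "'a set \<Rightarrow> 'a set set \<Rightarrow> 'a set set" where
  "components V E = (\<lambda>x. {y. reachable V E x y}) ` V"

definition num_components :: "'a set \<Rightarrow> 'a set set \<Rightarrow> nat" where
  "num_components V E = card (components V E)"

definition del_verts_V :: "'a set \<Rightarrow> 'a set \<Rightarrow> 'a set" where
  "del_verts_V V S = V - S"

definition del_verts_E :: "'a set set \<Rightarrow> 'a set \<Rightarrow> 'a set set" where
  "del_verts_E E S = {e \<in> E. e \<inter> S = {}}"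

definition connected_graph :: "'a set \<Rightarrow> 'a set set \<Rightarrow> bool" where
  "connected_graph V E \<longleftrightarrow> num_components V E \<le> 1"

definition cutset :: "'a set \<Rightarrow> 'a set set \<Rightarrow> 'a set \<Rightarrow> bool" where
  "cutset V E S \<longleftrightarrow> S \<subseteq> V \<and> \<not> connected_graph (del_verts_V V S) (del_verts_E E S)"

definition complete_graph :: "'a set \<Rightarrow> 'a set set \<Rightarrow> bool" where
  "complete_graph V E \<longleftrightarrow> (\<forall>x\<in>V. \<forall>y\<in>V. x \<noteq> y \<longrightarrow> {x, y} \<in> E)"

definition tough :: "'a set \<Rightarrow> 'a set set \<Rightarrow> real \<Rightarrow> bool" where
  "tough V E t \<longleftrightarrow> t > 0 \<and>
     (\<forall>S. cutset V E S \<longrightarrow> real (num_components (del_verts_V V S) (del_verts_E E S)) \<le> real (card S) / t)"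

definition toughness :: "'a set \<Rightarrow> 'a set set \<Rightarrow> ereal" where
  "toughness V E =
     (if complete_graph V E then \<infinity>
      else if \<exists>t. tough V E t then ereal (GREATEST t. tough V E t)
      else 0)"

definition minimally_tough :: "'a set \<Rightarrow> 'a set set \<Rightarrow> real \<Rightarrow> bool" where
  "minimally_tough V E t \<longleftrightarrow>
     toughness V E = ereal t \<and> (\<forall>e\<in>E. toughness V (E - {e}) < ereal t)"

definition split_graph :: "'a set \<Rightarrow> 'a set set \<Rightarrow> bool" where
  "split_graph V E \<longleftrightarrow> (\<exists>K I. K \<union> I = V \<and> K \<inter> I = {} \<and>
      (\<forall>x\<in>K. \<forall>y\<in>K. x \<noteq> y \<longrightarrow> {x, y} \<in> E) \<and>
      (\<forall>x\<in>I. \<forall>y\<in>I. {x, y} \<notin> E))"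

definition degree :: "'a set set \<Rightarrow> 'a \<Rightarrow> nat" where
  "degree E v = card {u. {v, u} \<in> E}"

end

theory Submission
  imports Defs
begin

text \<open>Let \<open>K \<union> I\<close> be the split partition of \<open>G\<close>. If a vertex \<open>u \<in> I\<close> had two
  neighbours \<open>x, y\<close> (necessarily in \<open>K\<close>), minimality would give a cutset \<open>T\<close> of
  \<open>G - xy\<close> with \<open>|T| < t \<omega>(G - xy - T)\<close>. Since \<open>T\<close> is no cutset violating the
  toughness of \<open>G\<close>, it separates \<open>x\<close> from \<open>y\<close>, so it contains \<open>K - {x, y}\<close> and all
  common neighbours of \<open>x\<close> and \<open>y\<close>. Counting against the cutsets \<open>K - {y}\<close> and \<open>K\<close>
  shows that \<open>u\<close> is the only neighbour of \<open>x\<close> in \<open>I\<close> and \<open>|K| - 1 < t (|I| + 1)\<close>.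
  Then deleting \<open>K - N(u)\<close> isolates all of \<open>I\<close>, which gives \<open>deg u - 1 < t\<close>, whereas
  \<open>deg u \<ge> 2t\<close> because \<open>u\<close> has a non-neighbour. Hence vertices of \<open>I\<close> have degree
  at most 1, and one of them with a non-neighbour has degree exactly \<open>1 = \<lceil>2t\<rceil>\<close>.\<close>

section \<open>Neighbourhoods and components\<close>

definition neighbours :: "'a set set \<Rightarrow> 'a \<Rightarrow> 'a set" where
  "neighbours E v = {u. {v, u} \<in> E}"

lemma degree_eq_card_neighbours: "degree E v = card (neighbours E v)"
  unfolding degree_def neighbours_def ..

lemma neighbours_sym: "u \<in> neighbours E v \<longleftrightarrow> v \<in> neighbours E u"
  unfolding neighbours_def by (simp add: insert_commute)

lemma simple_graph_edge_in_verts: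
  assumes "simple_graph V E" "{x, y} \<in> E" shows "x \<in> V" "y \<in> V"
  using assms unfolding simple_graph_def by auto

lemma simple_graph_no_loop:
  assumes "simple_graph V E" shows "{x} \<notin> E"
  using assms unfolding simple_graph_def by fastforce

lemma simple_graph_neighbours_subset:
  assumes "simple_graph V E" shows "neighbours E v \<subseteq> V"
  using simple_graph_edge_in_verts[OF assms] unfolding neighbours_def by blast

lemma simple_graph_Diff: "simple_graph V E \<Longrightarrow> simple_graph V (E - F)"
  unfolding simple_graph_def by blast

lemma card_ge_2_ex_neq:
  assumes "2 \<le> card A" shows "\<exists>y\<in>A. y \<noteq> x"
proof (rule ccontr)
  assume "\<not> (\<exists>y\<in>A. y \<noteq> x)"
  then have "card A \<le> card {x}" by (intro card_mono) auto
  then show False using assms by simp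
qed

lemma reachable_refl: "x \<in> V \<Longrightarrow> reachable V E x x"
  unfolding reachable_def by simp

lemma reachable_edge: "x \<in> V \<Longrightarrow> y \<in> V \<Longrightarrow> {x, y} \<in> E \<Longrightarrow> reachable V E x y"
  unfolding reachable_def by (simp add: r_into_rtranclp)

lemma reachable_trans: "reachable V E x y \<Longrightarrow> reachable V E y z \<Longrightarrow> reachable V E x z"
  unfolding reachable_def by (meson rtranclp_trans)

lemma reachable_sym:
  assumes "reachable V E x y" shows "reachable V E y x"
proof -
  let ?R = "\<lambda>u v. u \<in> V \<and> v \<in> V \<and> {u, v} \<in> E"
  have "?R\<^sup>*\<^sup>* x y" using assms unfolding reachable_def by blast
  then have "?R\<^sup>*\<^sup>* y x"
  proof (induction rule: rtranclp_induct)
    case (step a b)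
    then have "?R b a" by (simp add: insert_commute)
    then show ?case using step.IH by (rule converse_rtranclp_into_rtranclp)
  qed simp
  then show ?thesis using assms unfolding reachable_def by blast
qed

lemma reachable_from_isolated:
  assumes "\<forall>z\<in>V. z \<noteq> w \<longrightarrow> {w, z} \<notin> E" "reachable V E w z" shows "z = w"
proof -
  have "(\<lambda>u v. u \<in> V \<and> v \<in> V \<and> {u, v} \<in> E)\<^sup>*\<^sup>* w z"
    using assms(2) unfolding reachable_def by blast
  then show ?thesis by (induction rule: rtranclp_induct) (use assms(1) in auto)
qed

lemma card_le_num_components:
  assumes "finite V" "R \<subseteq> V" "\<forall>a\<in>R. \<forall>b\<in>R. reachable V E a b \<longrightarrow> a = b"
  shows "card R \<le> num_components V E"
proof -
  let ?comp = "\<lambda>x. {y. reachable V E x y}"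
  have "inj_on ?comp R"
  proof (rule inj_onI)
    fix a b assume ab: "a \<in> R" "b \<in> R" "?comp a = ?comp b"
    have "b \<in> ?comp b" using ab assms(2) by (auto intro: reachable_refl)
    then show "a = b" using ab assms(3) by auto
  qed
  then have "card R = card (?comp ` R)" by (simp add: card_image)
  also have "\<dots> \<le> card (?comp ` V)" using assms by (intro card_mono) auto
  finally show ?thesis unfolding num_components_def components_def .
qed

lemma num_components_le_card:
  assumes "finite A" "\<forall>v\<in>V. \<exists>a\<in>A. reachable V E v a"
  shows "num_components V E \<le> card A"
proof -
  let ?comp = "\<lambda>x. {y. reachable V E x y}"
  have "components V E \<subseteq> ?comp ` A"
  proof
    fix c assume "c \<in> components V E"
    then obtain v where v: "v \<in> V" "c = ?comp v" unfolding components_def by blast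
    then obtain a where a: "a \<in> A" "reachable V E v a" using assms by blast
    have "?comp v = ?comp a"
      using reachable_trans[OF a(2)] reachable_trans[OF reachable_sym[OF a(2)]] by blast
    then show "c \<in> ?comp ` A" using v a by blast
  qed
  then have "card (components V E) \<le> card (?comp ` A)"
    using assms(1) by (intro card_mono) auto
  also have "\<dots> \<le> card A" using assms(1) by (rule card_image_le)
  finally show ?thesis unfolding num_components_def .
qed

lemma reachable_insert_edge:
  assumes "reachable V E x y"
  shows "reachable V (insert {x, y} E) a b \<longleftrightarrow> reachable V E a b"
proof
  assume "reachable V (insert {x, y} E) a b"
  then have "(\<lambda>u v. u \<in> V \<and> v \<in> V \<and> {u, v} \<in> insert {x, y} E)\<^sup>*\<^sup>* a b" "a \<in> V"
    unfolding reachable_def by blast+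
  then show "reachable V E a b"
  proof (induction rule: rtranclp_induct)
    case base then show ?case by (rule reachable_refl)
  next
    case (step c d)
    then have "{c, d} \<in> E \<or> {c, d} = {x, y}" "c \<in> V" "d \<in> V" by auto
    then have "reachable V E c d"
      using assms reachable_sym by (auto simp: doubleton_eq_iff intro: reachable_edge)
    with step show ?case by (blast intro: reachable_trans)
  qed
next
  assume "reachable V E a b"
  then show "reachable V (insert {x, y} E) a b"
    unfolding reachable_def by (auto elim: rtranclp_mono[THEN predicate2D, rotated])
qed

lemma num_components_insert_edge:
  assumes "reachable V E x y"
  shows "num_components V (insert {x, y} E) = num_components V E"
proof -
  have "reachable V (insert {x, y} E) = reachable V E"
    using reachable_insert_edge[OF assms] by blast
  then show ?thesis unfolding num_components_def components_def by simp
qed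

section \<open>Toughness\<close>

lemma cutset_isolating:
  assumes "finite V" "W \<subseteq> V" "R \<subseteq> V - W" "2 \<le> card R"
    and isolated: "\<forall>a\<in>R - {r}. neighbours E a \<inter> (V - W) \<subseteq> {a}"
  shows "cutset V E W" "card R \<le> num_components (del_verts_V V W) (del_verts_E E W)"
proof -
  have isolated': "\<forall>z\<in>V - W. z \<noteq> a \<longrightarrow> {a, z} \<notin> del_verts_E E W" if "a \<in> R - {r}" for a
    using isolated that unfolding del_verts_E_def neighbours_def by blast
  have "a = b" if "a \<in> R" "b \<in> R" "reachable (V - W) (del_verts_E E W) a b" for a b
  proof (cases "a = r")
    case True
    then show ?thesis
      using that reachable_from_isolated[OF isolated', OF _ reachable_sym] by blast
  next
    case False
    then show ?thesis using that reachable_from_isolated[OF isolated'] by blast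
  qed
  then have "card R \<le> num_components (V - W) (del_verts_E E W)"
    using assms by (intro card_le_num_components) auto
  then show "card R \<le> num_components (del_verts_V V W) (del_verts_E E W)"
    unfolding del_verts_V_def .
  then show "cutset V E W"
    using assms unfolding cutset_def connected_graph_def by simp
qed

lemma tough_num_components_le:
  assumes "tough V E t" "cutset V E S"
  shows "t * num_components (del_verts_V V S) (del_verts_E E S) \<le> card S"
  using assms unfolding tough_def by (auto simp: field_simps)

lemma tough_isolating_bound:
  assumes "tough V E t" "finite V" "W \<subseteq> V" "R \<subseteq> V - W" "2 \<le> card R"
    and "\<forall>a\<in>R - {r}. neighbours E a \<inter> (V - W) \<subseteq> {a}"
  shows "t * card R \<le> card W"
proof -
  have "t * card R \<le> t * num_components (del_verts_V V W) (del_verts_E E W)"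
    using cutset_isolating[OF assms(2-)] assms(1) unfolding tough_def by simp
  also have "\<dots> \<le> card W"
    using tough_num_components_le[OF assms(1) cutset_isolating(1)[OF assms(2-)]] .
  finally show ?thesis .
qed

lemma cutset_exists_if_not_complete:
  assumes "simple_graph V E" "\<not> complete_graph V E"
  shows "\<exists>S. cutset V E S"
proof -
  obtain a b where ab: "a \<in> V" "b \<in> V" "a \<noteq> b" "{a, b} \<notin> E"
    using assms(2) unfolding complete_graph_def by blast
  have "cutset V E (V - {a, b})"
    by (rule cutset_isolating(1)[where R = "{a, b}" and r = b])
      (use assms(1) ab in \<open>auto simp: simple_graph_def neighbours_def\<close>)
  then show ?thesis ..
qed

lemma tough_Greatest:
  assumes "simple_graph V E" "\<not> complete_graph V E" "tough V E s"
  shows "tough V E (GREATEST t. tough V E t)" "s \<le> (GREATEST t. tough V E t)"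
proof -
  define ratio where
    "ratio S = real (card S) / num_components (del_verts_V V S) (del_verts_E E S)" for S
  define m where "m = Min (ratio ` {S. cutset V E S})"
  have "finite {S. cutset V E S}"
    using assms(1) unfolding cutset_def simple_graph_def by simp
  moreover have "{S. cutset V E S} \<noteq> {}"
    using cutset_exists_if_not_complete[OF assms(1,2)] by blast
  moreover have "num_components (del_verts_V V S) (del_verts_E E S) > 0" if "cutset V E S" for S
    using that unfolding cutset_def connected_graph_def by simp
  ultimately have tough_iff: "tough V E t \<longleftrightarrow> 0 < t \<and> t \<le> m" for t
    unfolding tough_def m_def ratio_def by (auto simp: Min_ge_iff field_simps)
  then have "(GREATEST t. tough V E t) = m"
    using assms(3) by (intro Greatest_equality) auto
  then show "tough V E (GREATEST t. tough V E t)" "s \<le> (GREATEST t. tough V E t)"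
    using tough_iff assms(3) by auto
qed

lemma tough_if_toughness_eq:
  assumes "simple_graph V E" "toughness V E = ereal t" "t > 0"
  shows "tough V E t" "\<not> complete_graph V E"
proof -
  show nc: "\<not> complete_graph V E" using assms(2) unfolding toughness_def by auto
  have "\<exists>s. tough V E s"
    using assms(2,3) nc unfolding toughness_def by (auto split: if_splits)
  then have "toughness V E = ereal (GREATEST t. tough V E t)" "\<exists>s. tough V E s"
    using nc unfolding toughness_def by auto
  then show "tough V E t" using tough_Greatest(1)[OF assms(1) nc] assms(2) by auto
qed

lemma cutset_if_toughness_less:
  fixes t :: real
  assumes "simple_graph V E" "toughness V E < ereal t" "t > 0"
  obtains S where "cutset V E S"
    "card S < t * num_components (del_verts_V V S) (del_verts_E E S)"
proof -
  have nc: "\<not> complete_graph V E" using assms(2) unfolding toughness_def by auto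
  have "\<not> tough V E t"
  proof
    assume "tough V E t"
    then have "t \<le> (GREATEST t. tough V E t)" "toughness V E = ereal (GREATEST t. tough V E t)"
      using tough_Greatest(2)[OF assms(1) nc] nc unfolding toughness_def by auto
    then show False using assms(2) by simp
  qed
  then show ?thesis using that assms(3) unfolding tough_def by (auto simp: field_simps)
qed

lemma tough_degree_ge:
  assumes "simple_graph V E" "tough V E t" "v \<in> V" "z \<in> V" "z \<noteq> v" "{v, z} \<notin> E"
  shows "2 * t \<le> degree E v"
proof -
  have "t * card {v, z} \<le> card (neighbours E v)"
    by (rule tough_isolating_bound[where r = z])
      (use assms simple_graph_neighbours_subset simple_graph_no_loop
        in \<open>auto simp: simple_graph_def neighbours_def\<close>)
  then show ?thesis using assms(5) by (simp add: degree_eq_card_neighbours)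
qed

lemma tough_card_ge:
  assumes "simple_graph V E" "tough V E t" "\<not> complete_graph V E"
  shows "2 * t \<le> real (card V) - 2"
proof -
  obtain a b where ab: "a \<in> V" "b \<in> V" "a \<noteq> b" "{a, b} \<notin> E"
    using assms(3) unfolding complete_graph_def by blast
  have fin: "finite V" using assms(1) unfolding simple_graph_def by simp
  have "t * card {a, b} \<le> card (V - {a, b})"
    by (rule tough_isolating_bound[OF assms(2) fin, where r = b])
      (use ab in \<open>auto simp: neighbours_def\<close>)
  moreover have "card {a, b} \<le> card V" using ab fin by (intro card_mono) auto
  ultimately show ?thesis using ab fin by (simp add: of_nat_diff)
qed

section \<open>Split graphs\<close>

text \<open>In the application \<open>k = |K|\<close>, and \<open>b, x, y, z\<close> count the vertices of \<open>I\<close>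
  adjacent to both ends of a critical edge \<open>xy\<close>, only to \<open>x\<close>, only to \<open>y\<close>, and to
  neither; \<open>z\<^sub>T\<close> of the latter lie in the cutset \<open>T\<close>.\<close>

lemma critical_edge_arith:
  fixes t :: real and k b x y z z\<^sub>T :: nat
  assumes t: "t > 0" and b: "b \<ge> 1" and zT: "z\<^sub>T \<le> z"
    and crit: "real k - 2 + b + z\<^sub>T < t * (2 + (real z - z\<^sub>T))"
    and X: "x + z > 0 \<Longrightarrow> t * (1 + real x + real z) \<le> real k - 1"
    and Y: "y + z > 0 \<Longrightarrow> t * (1 + real y + real z) \<le> real k - 1"
    and order: "2 * t \<le> real k + b + x + y + z - 2"
    and indep: "b + x + y + z \<ge> 2 \<Longrightarrow> t * (real b + x + y + z) \<le> real k"
  shows "x = 0 \<and> y = 0 \<and> b = 1 \<and> z \<ge> 1 \<and> real k - 1 < t * (2 + real z)"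
proof -
  have ge_t: "t \<le> t * real n" if "n \<ge> 1" for n :: nat
    using that t by simp
  have z: "z \<ge> 1"
  proof (rule ccontr)
    assume "\<not> z \<ge> 1"
    then have "z = 0" "z\<^sub>T = 0" using zT by auto
    then have k: "real k - 1 < 2 * t" using crit b by simp
    have "x = 0"
      using X ge_t[of x] k \<open>z = 0\<close> by (cases "x = 0") (auto simp: algebra_simps)
    moreover have "y = 0"
      using Y ge_t[of y] k \<open>z = 0\<close> by (cases "y = 0") (auto simp: algebra_simps)
    ultimately show False using order crit \<open>z = 0\<close> \<open>z\<^sub>T = 0\<close> by simp
  qed
  have "t * x + t * z\<^sub>T + z\<^sub>T < t" "t * y + t * z\<^sub>T + z\<^sub>T < t"
    using X Y z crit b by (auto simp: algebra_simps)
  moreover have "t * x \<ge> 0" "t * y \<ge> 0" "t * z\<^sub>T \<ge> 0" using t by auto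
  ultimately have xyz: "x = 0" "y = 0" "z\<^sub>T = 0"
    using ge_t[of x] ge_t[of y] ge_t[of z\<^sub>T] by (linarith | force)+
  have "t * b + t * z \<le> real k" using indep b z xyz by (simp add: algebra_simps)
  then have "(t + 1) * b < (t + 1) * 2" using crit xyz by (simp add: algebra_simps)
  then have "real b < 2" using t by (simp only: mult_less_cancel_left_pos)
  then have "b = 1" using b by linarith
  then show ?thesis using xyz z crit by simp
qed

lemma critical_edge_cutset:
  fixes t :: real
  assumes "simple_graph V E" "tough V E t" "{x, y} \<in> E" "cutset V (E - {{x, y}}) T"
    and "card T < t * num_components (del_verts_V V T) (del_verts_E (E - {{x, y}}) T)"
  shows "x \<notin> T" "y \<notin> T" "neighbours E x \<inter> neighbours E y \<subseteq> T \<union> {x, y}"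
proof -
  let ?G = "del_verts_E E T" and ?G' = "del_verts_E (E - {{x, y}}) T"
  \<comment> \<open>otherwise \<open>T\<close> would be a cutset of \<open>G\<close> violating its toughness\<close>
  have differ: "num_components (V - T) ?G \<noteq> num_components (V - T) ?G'"
  proof
    assume eq: "num_components (V - T) ?G = num_components (V - T) ?G'"
    then have "cutset V E T"
      using assms(4) unfolding cutset_def connected_graph_def del_verts_V_def by simp
    from tough_num_components_le[OF assms(2) this] show False
      using assms(5) eq unfolding del_verts_V_def by simp
  qed
  have "?G = ?G'" if "x \<in> T \<or> y \<in> T" using that unfolding del_verts_E_def by auto
  then show xT: "x \<notin> T" and yT: "y \<notin> T" using differ by auto
  show "neighbours E x \<inter> neighbours E y \<subseteq> T \<union> {x, y}"
  proof
    fix w assume w: "w \<in> neighbours E x \<inter> neighbours E y"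
    show "w \<in> T \<union> {x, y}"
    proof (rule ccontr)
      assume "w \<notin> T \<union> {x, y}"
      then have "{x, w} \<in> ?G'" "{w, y} \<in> ?G'"
        using w xT yT unfolding del_verts_E_def neighbours_def
        by (auto simp: doubleton_eq_iff insert_commute)
      moreover have "x \<in> V - T" "y \<in> V - T" "w \<in> V - T"
        using simple_graph_edge_in_verts[OF assms(1)] assms(3) w xT yT \<open>w \<notin> T \<union> {x, y}\<close>
        unfolding neighbours_def by auto
      ultimately have "reachable (V - T) ?G' x y"
        by (meson reachable_edge reachable_trans)
      then have "num_components (V - T) (insert {x, y} ?G') = num_components (V - T) ?G'"
        by (rule num_components_insert_edge)
      moreover have "insert {x, y} ?G' = ?G"
        using assms(3) xT yT unfolding del_verts_E_def by auto
      ultimately show False using differ by simp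
    qed
  qed
qed

locale split_partition =
  fixes V :: "'a set" and E :: "'a set set" and K I :: "'a set"
  assumes simple: "simple_graph V E"
    and partition: "K \<union> I = V" "K \<inter> I = {}"
    and clique: "\<forall>a\<in>K. \<forall>b\<in>K. a \<noteq> b \<longrightarrow> {a, b} \<in> E"
    and independent: "\<forall>a\<in>I. \<forall>b\<in>I. {a, b} \<notin> E"
begin

lemma finite_V: "finite V" and finite_K: "finite K" and finite_I: "finite I"
  using simple partition unfolding simple_graph_def by auto

lemma neighbours_independent: "a \<in> I \<Longrightarrow> neighbours E a \<subseteq> K"
  using simple_graph_neighbours_subset[OF simple] independent partition
  unfolding neighbours_def by blast

lemma tough_non_neighbours_bound:
  fixes t :: real
  assumes "tough V E t" "y \<in> K" "I - neighbours E y \<noteq> {}"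
  shows "t * (1 + card (I - neighbours E y)) \<le> real (card K) - 1"
proof -
  let ?R = "insert y (I - neighbours E y)"
  have y: "y \<notin> I - neighbours E y" using assms(2) partition by auto
  have "card (I - neighbours E y) > 0" using assms(3) finite_I by auto
  then have "2 \<le> card ?R" using y finite_I by simp
  moreover have "\<forall>a\<in>?R - {y}. neighbours E a \<inter> (V - (K - {y})) \<subseteq> {a}"
  proof
    fix a assume a: "a \<in> ?R - {y}"
    then have "neighbours E a \<subseteq> K" "y \<notin> neighbours E a"
      using neighbours_independent neighbours_sym[of y E a] by auto
    then show "neighbours E a \<inter> (V - (K - {y})) \<subseteq> {a}" by blast
  qed
  ultimately have "t * card ?R \<le> card (K - {y})"
    using partition assms(2) by (intro tough_isolating_bound[OF assms(1) finite_V]) auto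
  moreover have "card K \<ge> 1"
    using assms(2) finite_K by (metis One_nat_def Suc_leI card_gt_0_iff empty_iff)
  ultimately show ?thesis using y assms(2) finite_I by (simp add: of_nat_diff)
qed

lemma tough_independent_bound:
  fixes t :: real
  assumes "tough V E t" "u \<in> I" "2 \<le> card I" "C \<subseteq> K"
    and "\<forall>a\<in>I - {u}. neighbours E a \<inter> C = {}"
  shows "t * card I \<le> real (card K) - card C"
proof -
  have "\<forall>a\<in>I - {u}. neighbours E a \<inter> (V - (K - C)) \<subseteq> {a}"
    using assms(4,5) neighbours_independent partition by blast
  then have "t * card I \<le> card (K - C)"
    using partition assms(2-4) by (intro tough_isolating_bound[OF assms(1) finite_V]) auto
  then show ?thesis
    using assms(4) finite_K by (simp add: card_Diff_subset card_mono of_nat_diff finite_subset)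
qed

lemma components_del_edge_le:
  assumes "x \<in> K" "y \<in> K" "K - {x, y} \<subseteq> T" "x \<notin> T" "y \<notin> T"
  shows "num_components (del_verts_V V T) (del_verts_E (E - {{x, y}}) T)
    \<le> 2 + card (I - neighbours E x - neighbours E y - T)"
proof -
  let ?A = "{x, y} \<union> (I - neighbours E x - neighbours E y - T)"
  have "num_components (V - T) (del_verts_E (E - {{x, y}}) T) \<le> card ?A"
  proof (rule num_components_le_card)
    show "finite ?A" using finite_I by simp
    show "\<forall>v\<in>V - T. \<exists>a\<in>?A. reachable (V - T) (del_verts_E (E - {{x, y}}) T) v a"
    proof
      fix v assume v: "v \<in> V - T"
      have xy: "x \<in> V - T" "y \<in> V - T" using assms partition by auto
      show "\<exists>a\<in>?A. reachable (V - T) (del_verts_E (E - {{x, y}}) T) v a"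
      proof (cases "v \<in> ?A")
        case True
        then show ?thesis using v by (blast intro: reachable_refl)
      next
        case False
        then have "v \<in> I" "v \<noteq> x" "v \<noteq> y" using v assms partition by auto
        with False v
        have "{v, x} \<in> del_verts_E (E - {{x, y}}) T \<or> {v, y} \<in> del_verts_E (E - {{x, y}}) T"
          using assms(4,5) unfolding del_verts_E_def neighbours_def
          by (auto simp: insert_commute doubleton_eq_iff)
        then show ?thesis using v xy by (auto intro: reachable_edge)
      qed
    qed
  qed
  also have "\<dots> \<le> 2 + card (I - neighbours E x - neighbours E y - T)"
    using finite_I by (simp add: card_insert_le_m1 le_SucI)
  finally show ?thesis unfolding del_verts_V_def .
qed

lemma critical_edge_cutset_bound:
  fixes t :: real
  assumes tough: "tough V E t" and xy: "x \<in> K" "y \<in> K" "x \<noteq> y"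
    and T: "cutset V (E - {{x, y}}) T"
      "card T < t * num_components (del_verts_V V T) (del_verts_E (E - {{x, y}}) T)"
  defines "B \<equiv> I \<inter> neighbours E x \<inter> neighbours E y"
    and "Z \<equiv> I - neighbours E x - neighbours E y"
  shows "real (card K) - 2 + card B + card (Z \<inter> T) < t * (2 + (real (card Z) - card (Z \<inter> T)))"
proof -
  have "{x, y} \<in> E" using clique xy by blast
  note crit = critical_edge_cutset[OF simple tough this T]
  have finT: "finite T" using T(1) finite_V unfolding cutset_def by (auto intro: finite_subset)
  have KT: "K - {x, y} \<subseteq> T"
    using crit(3) clique xy unfolding neighbours_def by (auto simp: insert_commute)
  have "B \<subseteq> T" using crit(3) xy partition unfolding B_def by auto
  then have "(K - {x, y}) \<union> B \<union> (Z \<inter> T) \<subseteq> T" using KT by blast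
  then have "card ((K - {x, y}) \<union> B \<union> (Z \<inter> T)) \<le> card T"
    using finT by (rule card_mono[rotated])
  moreover have "card ((K - {x, y}) \<union> B \<union> (Z \<inter> T)) = card (K - {x, y}) + card B + card (Z \<inter> T)"
    using finite_K finite_I partition unfolding B_def Z_def
    by (subst card_Un_disjoint; auto)+
  moreover have "card (K - {x, y}) = card K - 2" using xy finite_K by simp
  moreover have "card {x, y} \<le> card K" using xy finite_K by (intro card_mono) auto
  ultimately have "real (card K) - 2 + card B + card (Z \<inter> T) \<le> card T"
    using xy(3) by simp
  also have "\<dots> < t * num_components (del_verts_V V T) (del_verts_E (E - {{x, y}}) T)"
    by (rule T(2))
  also have "\<dots> \<le> t * (2 + card (Z - T))"
    using components_del_edge_le[OF xy(1,2) KT crit(1,2)] tough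
    unfolding tough_def Z_def by (intro mult_left_mono) auto
  also have "card (Z - T) = card Z - card (Z \<inter> T)"
    using finite_I unfolding Z_def by (simp add: card_Diff_subset_Int)
  finally show ?thesis
    using finite_I unfolding Z_def by (simp add: card_mono of_nat_diff)
qed

lemma critical_edge_bounds:
  fixes t :: real
  assumes tough: "tough V E t" and order: "2 * t \<le> real (card V) - 2"
    and u: "u \<in> I" "x \<in> neighbours E u" "y \<in> neighbours E u" "x \<noteq> y"
    and T: "cutset V (E - {{x, y}}) T"
      "card T < t * num_components (del_verts_V V T) (del_verts_E (E - {{x, y}}) T)"
  shows "I \<inter> neighbours E x \<subseteq> {u}" "2 \<le> card I" "real (card K) - 1 < t * (1 + card I)"
proof -
  have xy: "x \<in> K" "y \<in> K" using u neighbours_independent by auto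
  define B where "B = I \<inter> neighbours E x \<inter> neighbours E y"
  define X where "X = I \<inter> neighbours E x - neighbours E y"
  define Y where "Y = I \<inter> neighbours E y - neighbours E x"
  define Z where "Z = I - neighbours E x - neighbours E y"
  have fin: "finite B" "finite X" "finite Y" "finite Z"
    using finite_I unfolding B_def X_def Y_def Z_def by auto
  have "u \<in> B"
    using u neighbours_sym[of x E u] neighbours_sym[of y E u] unfolding B_def by blast
  then have B: "card B \<ge> 1" using fin(1) by (metis One_nat_def Suc_leI card_gt_0_iff empty_iff)
  have "I = B \<union> X \<union> Y \<union> Z" "I - neighbours E y = X \<union> Z" "I - neighbours E x = Y \<union> Z"
    and disjoint: "B \<inter> X = {}" "(B \<union> X) \<inter> Y = {}" "(B \<union> X \<union> Y) \<inter> Z = {}" "X \<inter> Z = {}" "Y \<inter> Z = {}"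
    unfolding B_def X_def Y_def Z_def by auto
  then have I: "card I = card B + card X + card Y + card Z"
    and nonneighbours: "card (I - neighbours E y) = card X + card Z"
      "card (I - neighbours E x) = card Y + card Z"
    using fin by (simp_all add: card_Un_disjoint)
  have tpos: "t > 0" using tough unfolding tough_def by simp
  have zT: "card (Z \<inter> T) \<le> card Z" using fin by (intro card_mono) auto
  have crit: "real (card K) - 2 + card B + card (Z \<inter> T) < t * (2 + (real (card Z) - card (Z \<inter> T)))"
    using critical_edge_cutset_bound[OF tough xy u(4) T] unfolding B_def Z_def .
  have X: "t * (1 + real (card X) + card Z) \<le> real (card K) - 1" if "card X + card Z > 0"
  proof -
    have "I - neighbours E y \<noteq> {}" using that nonneighbours(1) card_gt_0_iff by force
    then show ?thesis
      using tough_non_neighbours_bound[OF tough xy(2)] nonneighbours(1) by (simp add: add.assoc)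
  qed
  have Y: "t * (1 + real (card Y) + card Z) \<le> real (card K) - 1" if "card Y + card Z > 0"
  proof -
    have "I - neighbours E x \<noteq> {}" using that nonneighbours(2) card_gt_0_iff by force
    then show ?thesis
      using tough_non_neighbours_bound[OF tough xy(1)] nonneighbours(2) by (simp add: add.assoc)
  qed
  have "card V = card K + card I" using partition finite_K finite_I by (metis card_Un_disjoint)
  then have order': "2 * t \<le> real (card K) + card B + card X + card Y + card Z - 2"
    using order I by simp
  have independent: "t * (real (card B) + card X + card Y + card Z) \<le> card K"
    if "card B + card X + card Y + card Z \<ge> 2"
    using tough_independent_bound[OF tough u(1) _ empty_subsetI] that I by simp
  note arith = critical_edge_arith[OF tpos B zT crit X Y order' independent]
  then have "X = {}" "B = {u}"
    using fin(1,2) \<open>u \<in> B\<close> by (auto simp: card_1_singleton_iff)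
  then show "I \<inter> neighbours E x \<subseteq> {u}" unfolding B_def X_def by blast
  show "2 \<le> card I" "real (card K) - 1 < t * (1 + card I)" using arith I by simp_all
qed

lemma independent_degree_le_1:
  fixes t :: real
  assumes minimal: "minimally_tough V E t" and "t > 0" and u: "u \<in> I"
  shows "degree E u \<le> 1"
proof (rule ccontr)
  assume "\<not> degree E u \<le> 1"
  then have two: "2 \<le> card (neighbours E u)" by (simp add: degree_eq_card_neighbours)
  have tough: "tough V E t" and "\<not> complete_graph V E"
    using tough_if_toughness_eq[OF simple _ \<open>t > 0\<close>] minimal unfolding minimally_tough_def by auto
  then have order: "2 * t \<le> real (card V) - 2" by (rule tough_card_ge[OF simple])
  have bounds: "I \<inter> neighbours E x \<subseteq> {u}" "2 \<le> card I" "real (card K) - 1 < t * (1 + card I)"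
    if x: "x \<in> neighbours E u" for x
  proof -
    obtain y where y: "y \<in> neighbours E u" "x \<noteq> y" using card_ge_2_ex_neq[OF two] by metis
    then have "{x, y} \<in> E" using x u neighbours_independent clique by blast
    then have "toughness V (E - {{x, y}}) < ereal t"
      using minimal unfolding minimally_tough_def by blast
    then obtain T where "cutset V (E - {{x, y}}) T"
      "card T < t * num_components (del_verts_V V T) (del_verts_E (E - {{x, y}}) T)"
      using cutset_if_toughness_less[OF simple_graph_Diff[OF simple] _ \<open>t > 0\<close>] by blast
    from critical_edge_bounds[OF tough order u x y this]
    show "I \<inter> neighbours E x \<subseteq> {u}" "2 \<le> card I" "real (card K) - 1 < t * (1 + card I)" .
  qed
  obtain x where x: "x \<in> neighbours E u" using two by (metis card_ge_2_ex_neq)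
  have "neighbours E a \<inter> neighbours E u = {}" if a: "a \<in> I - {u}" for a
  proof -
    have "c \<notin> neighbours E a" if "c \<in> neighbours E u" for c
      using bounds(1)[OF that] a neighbours_sym[of a E c] by blast
    then show ?thesis by blast
  qed
  then have "t * card I \<le> real (card K) - card (neighbours E u)"
    using tough_independent_bound[OF tough u bounds(2)[OF x] neighbours_independent[OF u]] by blast
  then have "real (card (neighbours E u)) - 1 < t"
    using bounds(3)[OF x] by (simp add: algebra_simps)
  moreover obtain w where "w \<in> I" "w \<noteq> u" using card_ge_2_ex_neq[OF bounds(2)[OF x]] by blast
  then have "2 * t \<le> card (neighbours E u)"
    using tough_degree_ge[OF simple tough] u independent partition
    by (auto simp: degree_eq_card_neighbours)
  ultimately show False using two by linarith
qed

end

theorem mainTheorem8: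
  fixes V :: "'a set" and E :: "'a set set" and t :: rat
  assumes "simple_graph V E"
    and "t > 0"
    and "split_graph V E"
    and "minimally_tough V E (real_of_rat t)"
  shows "\<exists>v\<in>V. int (degree E v) = \<lceil>2 * t\<rceil>"
proof -
  obtain K I where "split_partition V E K I"
    using assms(1,3) unfolding split_graph_def split_partition_def by blast
  then interpret split_partition V E K I .
  have t: "real_of_rat t > 0" using assms(2) by simp
  have tough: "tough V E (real_of_rat t)" and "\<not> complete_graph V E"
    using tough_if_toughness_eq[OF simple _ t] assms(4) unfolding minimally_tough_def by auto
  then obtain a b where ab: "a \<in> V" "b \<in> V" "a \<noteq> b" "{a, b} \<notin> E"
    unfolding complete_graph_def by blast
  obtain u z where uz: "u \<in> I" "z \<in> V" "z \<noteq> u" "{u, z} \<notin> E"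
  proof (cases "a \<in> I")
    case True
    then show ?thesis using that ab by blast
  next
    case False
    then have "b \<in> I" using ab clique partition by blast
    then show ?thesis using that ab by (simp add: insert_commute)
  qed
  then have "2 * real_of_rat t \<le> degree E u" "degree E u \<le> 1"
    using tough_degree_ge[OF simple tough] independent_degree_le_1[OF assms(4) t] partition by auto
  moreover from this(1) have "real (degree E u) > 0" using t by linarith
  ultimately have "degree E u = 1" "real_of_rat (2 * t) \<le> real_of_rat 1"
    by (simp_all add: of_rat_mult)
  then have "degree E u = 1" "2 * t \<le> 1" by (simp_all only: of_rat_less_eq)
  then have "int (degree E u) = \<lceil>2 * t\<rceil>" using assms(2) by (simp add: ceiling_unique)
  then show ?thesis using uz partition by blast
qed

end
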